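(* For every RelReach instance with $\mathsf{comp}\in\{\ge,>,\not\approx_\epsilon\mid \epsilon\in\mathbb Q_{\ge0}\}$ satisfying one of the conditions (a) $n=m$; (b) for all $i,i'$: $k_i=k_{i'}\Rightarrow s_i=s_{i'}$, and all $T_i$ are absorbing; (c) for all $i,i'$: $k_i=k_{i'}\Rightarrow((q_i\ge0\iff q_{i'}\ge 0)\wedge T_i=T_{i'})$, the property holds when quantifying over general schedulers if and only if it holds when quantifying over memoryless deterministic schedulers.
   Context: An MDP is $\mathcal M=(S,\mathrm{Act},P)$ with $S,\mathrm{Act}$ finite non-empty and $P:S\times\mathrm{Act}\times S\to[0,1]$ such that each state has a non-empty set of enabled actions $\alpha$ (with $\sum_{s'}P(s,\alpha,s')=1$), and $\sum_{s'}P(s,\alpha,s')=0$ for others. A state is absorbing if $P(s,\alpha,s)=1$ for all enabled $\alpha$; a set is absorbing if all its states are. A general scheduler maps finite paths to distributions over enabled actions of the last state; a memoryless deterministic (MD) scheduler chooses one enabled action depending only on the current state. $\Pr^\sigma_s(\Diamond T)$ is the probability of eventually reaching $T$ from $s$ under $\sigma$. A RelReach property is $\exists \sigma_1,\ldots,\sigma_n.~\sum_{i=1}^m q_i\Pr^{\sigma_{k_i}}_{s_i}(\Diamond T_i)\ \mathsf{comp}\ q_{m+1}$ with $m\ge n$, $q_i\in\mathbb Q$, $s_i\in S$, $\{k_1,\dots,k_m\}=\{1,\dots,n\}$, $T_i\subseteq S$; $r\not\approx_\epsilon r'$ iff $|r-r'|>\epsilon$. *)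

theory Defs
  imports Complex_Main
begin

definition enabled :: "('s \<Rightarrow> 'a \<Rightarrow> 's \<Rightarrow> real) \<Rightarrow> 's \<Rightarrow> 'a set" where
  "enabled P s = {\<alpha>. (\<Sum>s'\<in>UNIV. P s \<alpha> s') = 1}"

definition is_mdp :: "('s::finite \<Rightarrow> 'a::finite \<Rightarrow> 's \<Rightarrow> real) \<Rightarrow> bool" where
  "is_mdp P \<longleftrightarrow> (\<forall>s \<alpha> s'. 0 \<le> P s \<alpha> s' \<and> P s \<alpha> s' \<le> 1)
     \<and> (\<forall>s \<alpha>. (\<Sum>s'\<in>UNIV. P s \<alpha> s') = 1 \<or> (\<Sum>s'\<in>UNIV. P s \<alpha> s') = 0)
     \<and> (\<forall>s. enabled P s \<noteq> {})"

definition absorbing_set :: "('s \<Rightarrow> 'a \<Rightarrow> 's \<Rightarrow> real) \<Rightarrow> 's set \<Rightarrow> bool" where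
  "absorbing_set P T \<longleftrightarrow> (\<forall>s\<in>T. \<forall>\<alpha>\<in>enabled P s. P s \<alpha> s = 1)"

text \<open>A general scheduler: given the history (list of visited state/chosen action
  pairs) and the current state, a probability distribution over actions, supported on
  the enabled actions of the current state.\<close>

type_synonym ('s, 'a) sched = "('s \<times> 'a) list \<Rightarrow> 's \<Rightarrow> 'a \<Rightarrow> real"

definition is_sched :: "('s \<Rightarrow> 'a::finite \<Rightarrow> 's \<Rightarrow> real) \<Rightarrow> ('s, 'a) sched \<Rightarrow> bool" where
  "is_sched P \<sigma> \<longleftrightarrow> (\<forall>h s \<alpha>. 0 \<le> \<sigma> h s \<alpha> \<and> (\<sigma> h s \<alpha> \<noteq> 0 \<longrightarrow> \<alpha> \<in> enabled P s))
     \<and> (\<forall>h s. (\<Sum>\<alpha>\<in>UNIV. \<sigma> h s \<alpha>) = 1)"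

definition is_md_sched :: "('s \<Rightarrow> 'a \<Rightarrow> 's \<Rightarrow> real) \<Rightarrow> ('s \<Rightarrow> 'a) \<Rightarrow> bool" where
  "is_md_sched P d \<longleftrightarrow> (\<forall>s. d s \<in> enabled P s)"

definition md_to_sched :: "('s \<Rightarrow> 'a) \<Rightarrow> ('s, 'a) sched" where
  "md_to_sched d = (\<lambda>h s \<alpha>. if \<alpha> = d s then 1 else 0)"

fun reach_within :: "('s::finite \<Rightarrow> 'a::finite \<Rightarrow> 's \<Rightarrow> real) \<Rightarrow> ('s, 'a) sched \<Rightarrow> 's set
    \<Rightarrow> nat \<Rightarrow> ('s \<times> 'a) list \<Rightarrow> 's \<Rightarrow> real" where
  "reach_within P \<sigma> T 0 h s = (if s \<in> T then 1 else 0)"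
| "reach_within P \<sigma> T (Suc n) h s = (if s \<in> T then 1 else
     (\<Sum>\<alpha>\<in>UNIV. \<sigma> h s \<alpha> * (\<Sum>s'\<in>UNIV. P s \<alpha> s' * reach_within P \<sigma> T n (h @ [(s, \<alpha>)]) s')))"

definition reach_prob :: "('s::finite \<Rightarrow> 'a::finite \<Rightarrow> 's \<Rightarrow> real) \<Rightarrow> ('s, 'a) sched \<Rightarrow> 's \<Rightarrow> 's set \<Rightarrow> real" where
  "reach_prob P \<sigma> s T = (SUP n. reach_within P \<sigma> T n [] s)"

datatype comparison = Geq | Gt | NotApprox rat

fun holds_comp :: "comparison \<Rightarrow> real \<Rightarrow> real \<Rightarrow> bool" where
  "holds_comp Geq x y = (x \<ge> y)"
| "holds_comp Gt x y = (x > y)"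
| "holds_comp (NotApprox \<epsilon>) x y = (\<bar>x - y\<bar> > real_of_rat \<epsilon>)"

text \<open>A RelReach instance: n scheduler variables (indexed 0..n-1), m terms (indexed 0..m-1),
  coefficients q i, constant c (= q_{m+1}), states s i, scheduler indices k i, targets T i.\<close>

definition relreach_wf :: "nat \<Rightarrow> nat \<Rightarrow> (nat \<Rightarrow> nat) \<Rightarrow> bool" where
  "relreach_wf n m k \<longleftrightarrow> m \<ge> n \<and> k ` {..<m} = {..<n}"

definition relreach_value :: "('s::finite \<Rightarrow> 'a::finite \<Rightarrow> 's \<Rightarrow> real) \<Rightarrow> nat \<Rightarrow> (nat \<Rightarrow> rat)
    \<Rightarrow> (nat \<Rightarrow> 's) \<Rightarrow> (nat \<Rightarrow> nat) \<Rightarrow> (nat \<Rightarrow> 's set) \<Rightarrow> (nat \<Rightarrow> ('s, 'a) sched) \<Rightarrow> real" where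
  "relreach_value P m q s k T \<sigma>s = (\<Sum>i<m. real_of_rat (q i) * reach_prob P (\<sigma>s (k i)) (s i) (T i))"

definition relreach_general :: "('s::finite \<Rightarrow> 'a::finite \<Rightarrow> 's \<Rightarrow> real) \<Rightarrow> nat \<Rightarrow> nat \<Rightarrow> (nat \<Rightarrow> rat)
    \<Rightarrow> (nat \<Rightarrow> 's) \<Rightarrow> (nat \<Rightarrow> nat) \<Rightarrow> (nat \<Rightarrow> 's set) \<Rightarrow> comparison \<Rightarrow> rat \<Rightarrow> bool" where
  "relreach_general P n m q s k T cmp c \<longleftrightarrow>
     (\<exists>\<sigma>s. (\<forall>j<n. is_sched P (\<sigma>s j)) \<and>
        holds_comp cmp (relreach_value P m q s k T \<sigma>s) (real_of_rat c))"

definition relreach_md :: "('s::finite \<Rightarrow> 'a::finite \<Rightarrow> 's \<Rightarrow> real) \<Rightarrow> nat \<Rightarrow> nat \<Rightarrow> (nat \<Rightarrow> rat)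
    \<Rightarrow> (nat \<Rightarrow> 's) \<Rightarrow> (nat \<Rightarrow> nat) \<Rightarrow> (nat \<Rightarrow> 's set) \<Rightarrow> comparison \<Rightarrow> rat \<Rightarrow> bool" where
  "relreach_md P n m q s k T cmp c \<longleftrightarrow>
     (\<exists>ds. (\<forall>j<n. is_md_sched P (ds j)) \<and>
        holds_comp cmp (relreach_value P m q s k T (\<lambda>j. md_to_sched (ds j))) (real_of_rat c))"

end

theory Submission
  imports Defs
begin

text \<open>
  Each scheduler variable of a RelReach property is shared by a group of terms. Under condition
  (c) such a group is a sum of reachability probabilities of one target, with weights of one sign;
  under (b) the targets are absorbing and the start state is common, so the group is the expected
  payoff collected on first entering the union of the targets. In both cases the group is a
  terminal-reward objective: payoff w(t) at the first visit t of a goal set G, and 0 if G is never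
  visited. Condition (a) is a special case of (c).

  For terminal-reward objectives some memoryless deterministic scheduler is optimal from all states
  at once. Take one whose value vector is not dominated by that of any other such scheduler. Policy
  improvement shows that its value is excessive outside G and nonnegative on the states from which G
  can be avoided forever. Such an excessive majorant bounds the value of every general scheduler,
  because the probability of being, after N steps, neither in G nor in an avoiding state tends to 0.

  Replacing the scheduler of each group by an optimal or by a pessimal memoryless deterministic one
  moves the value of the property up or down, and one of the two moves preserves the comparison.
\<close>

section \<open>Schedulers and weighted averages\<close>

definition sched_on :: "('s \<Rightarrow> 'a set) \<Rightarrow> ('s, 'a::finite) sched \<Rightarrow> bool" where
  "sched_on E \<sigma> \<longleftrightarrow> (\<forall>h s \<alpha>. 0 \<le> \<sigma> h s \<alpha> \<and> (\<sigma> h s \<alpha> \<noteq> 0 \<longrightarrow> \<alpha> \<in> E s))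
     \<and> (\<forall>h s. (\<Sum>\<alpha>\<in>UNIV. \<sigma> h s \<alpha>) = 1)"

lemma is_sched_iff_sched_on: "is_sched P \<sigma> \<longleftrightarrow> sched_on (enabled P) \<sigma>"
  unfolding is_sched_def sched_on_def by simp

lemma sched_on_md_to_sched: "sched_on (\<lambda>s. {d s}) (md_to_sched d)"
  unfolding sched_on_def md_to_sched_def by auto

lemma is_sched_md_to_sched: "is_md_sched P d \<Longrightarrow> is_sched P (md_to_sched d)"
  unfolding is_sched_def md_to_sched_def is_md_sched_def by auto

lemma is_mdp_nonneg: "is_mdp P \<Longrightarrow> 0 \<le> P s \<alpha> s'"
  unfolding is_mdp_def by auto

lemma enabled_sum_eq_1: "\<alpha> \<in> enabled P s \<Longrightarrow> (\<Sum>s'\<in>UNIV. P s \<alpha> s') = 1"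
  unfolding enabled_def by auto

lemma enabled_average_const: "\<alpha> \<in> enabled P s \<Longrightarrow> (\<Sum>s'\<in>UNIV. P s \<alpha> s' * c) = c"
  by (simp add: sum_distrib_right[symmetric] enabled_sum_eq_1)

lemma weighted_average_le:
  fixes p X :: "'b::finite \<Rightarrow> real"
  assumes "\<And>x. 0 \<le> p x" "sum p UNIV = 1" "\<And>x. p x \<noteq> 0 \<Longrightarrow> X x \<le> c"
  shows "(\<Sum>x\<in>UNIV. p x * X x) \<le> c"
proof -
  have "(\<Sum>x\<in>UNIV. p x * X x) \<le> (\<Sum>x\<in>UNIV. p x * c)"
    by (rule sum_mono) (metis assms(1,3) mult_left_mono mult_zero_left order_refl)
  also have "\<dots> = c"
    using assms(2) by (simp add: sum_distrib_right[symmetric])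
  finally show ?thesis .
qed

lemma weighted_average_ge:
  fixes p X :: "'b::finite \<Rightarrow> real"
  assumes "\<And>x. 0 \<le> p x" "sum p UNIV = 1" "\<And>x. p x \<noteq> 0 \<Longrightarrow> c \<le> X x"
  shows "c \<le> (\<Sum>x\<in>UNIV. p x * X x)"
  using weighted_average_le[of p "\<lambda>x. - X x" "- c"] assms by (simp add: sum_negf)

lemma weighted_average_eq_max:
  fixes p X :: "'b::finite \<Rightarrow> real"
  assumes "\<And>x. 0 \<le> p x" "sum p UNIV = 1" "\<And>x. p x \<noteq> 0 \<Longrightarrow> X x \<le> c"
    and "c \<le> (\<Sum>x\<in>UNIV. p x * X x)" and "p x \<noteq> 0"
  shows "X x = c"
proof -
  have gap_nonneg: "0 \<le> p y * (c - X y)" for y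
    using assms(1,3) by (cases "p y = 0") auto
  have "(\<Sum>y\<in>UNIV. p y * (c - X y)) = c - (\<Sum>y\<in>UNIV. p y * X y)"
    using assms(2) by (simp add: right_diff_distrib sum_subtractf sum_distrib_right[symmetric])
  moreover have "0 \<le> (\<Sum>y\<in>UNIV. p y * (c - X y))"
    using gap_nonneg by (intro sum_nonneg) auto
  ultimately have "(\<Sum>y\<in>UNIV. p y * (c - X y)) = 0"
    using assms(4) by linarith
  then have "p x * (c - X x) = 0"
    using gap_nonneg by (simp add: sum_nonneg_eq_0_iff)
  then show ?thesis using assms(5) by simp
qed

lemma sched_on_average_le:
  assumes "sched_on E \<sigma>" "\<And>\<alpha>. \<alpha> \<in> E s \<Longrightarrow> X \<alpha> \<le> c"
  shows "(\<Sum>\<alpha>\<in>UNIV. \<sigma> h s \<alpha> * X \<alpha>) \<le> c"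
  using assms unfolding sched_on_def by (intro weighted_average_le) auto

lemma sched_on_average_ge:
  assumes "sched_on E \<sigma>" "\<And>\<alpha>. \<alpha> \<in> E s \<Longrightarrow> c \<le> X \<alpha>"
  shows "c \<le> (\<Sum>\<alpha>\<in>UNIV. \<sigma> h s \<alpha> * X \<alpha>)"
  using assms unfolding sched_on_def by (intro weighted_average_ge) auto

lemma transition_average_le:
  assumes "is_mdp P" "\<alpha> \<in> enabled P x" "\<And>s'. P x \<alpha> s' \<noteq> 0 \<Longrightarrow> u s' \<le> c"
  shows "(\<Sum>s'\<in>UNIV. P x \<alpha> s' * u s') \<le> c"
  using assms by (intro weighted_average_le) (auto simp: is_mdp_nonneg enabled_sum_eq_1)

section \<open>Stopped expected payoffs\<close>

fun horizon_value :: "('s::finite \<Rightarrow> 'a::finite \<Rightarrow> 's \<Rightarrow> real) \<Rightarrow> ('s, 'a) sched \<Rightarrow> 's set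
    \<Rightarrow> ('s \<Rightarrow> real) \<Rightarrow> ('s \<Rightarrow> real) \<Rightarrow> nat \<Rightarrow> ('s \<times> 'a) list \<Rightarrow> 's \<Rightarrow> real" where
  "horizon_value P \<sigma> G f g 0 h s = (if s \<in> G then f s else g s)"
| "horizon_value P \<sigma> G f g (Suc N) h s = (if s \<in> G then f s else
     (\<Sum>\<alpha>\<in>UNIV. \<sigma> h s \<alpha> * (\<Sum>s'\<in>UNIV. P s \<alpha> s' * horizon_value P \<sigma> G f g N (h @ [(s, \<alpha>)]) s')))"

lemma horizon_value_goal [simp]: "s \<in> G \<Longrightarrow> horizon_value P \<sigma> G f g N h s = f s"
  by (cases N) auto

lemma reach_within_eq_horizon_value:
  "reach_within P \<sigma> T N h s = horizon_value P \<sigma> T (\<lambda>_. 1) (\<lambda>_. 0) N h s"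
  by (induction N arbitrary: h s) auto

lemma horizon_value_add:
  assumes "\<And>x. f x = f1 x + f2 x" "\<And>x. g x = g1 x + g2 x"
  shows "horizon_value P \<sigma> G f g N h s = horizon_value P \<sigma> G f1 g1 N h s + horizon_value P \<sigma> G f2 g2 N h s"
  by (induction N arbitrary: h s) (auto simp: assms sum.distrib distrib_left)

lemma horizon_value_scale:
  assumes "\<And>x. f x = c * f1 x" "\<And>x. g x = c * g1 x"
  shows "horizon_value P \<sigma> G f g N h s = c * horizon_value P \<sigma> G f1 g1 N h s"
  by (induction N arbitrary: h s) (auto simp: assms sum_distrib_left algebra_simps)

lemma horizon_value_mono:
  assumes "is_mdp P" "sched_on E \<sigma>"
    and "\<And>x. x \<in> G \<Longrightarrow> f1 x \<le> f2 x" "\<And>x. x \<notin> G \<Longrightarrow> g1 x \<le> g2 x"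
  shows "horizon_value P \<sigma> G f1 g1 N h s \<le> horizon_value P \<sigma> G f2 g2 N h s"
proof (induction N arbitrary: h s)
  case 0
  then show ?case using assms by auto
next
  case (Suc N)
  have "(\<Sum>\<alpha>\<in>UNIV. \<sigma> h s \<alpha> * (\<Sum>s'\<in>UNIV. P s \<alpha> s' * horizon_value P \<sigma> G f1 g1 N (h @ [(s, \<alpha>)]) s'))
     \<le> (\<Sum>\<alpha>\<in>UNIV. \<sigma> h s \<alpha> * (\<Sum>s'\<in>UNIV. P s \<alpha> s' * horizon_value P \<sigma> G f2 g2 N (h @ [(s, \<alpha>)]) s'))"
    using Suc assms(2) unfolding sched_on_def
    by (intro sum_mono mult_left_mono) (auto simp: is_mdp_nonneg[OF assms(1)])
  then show ?case using assms(3) by auto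
qed

lemma horizon_value_nonneg:
  assumes "is_mdp P" "sched_on E \<sigma>" "\<And>x. 0 \<le> f x" "\<And>x. 0 \<le> g x"
  shows "0 \<le> horizon_value P \<sigma> G f g N h s"
proof (induction N arbitrary: h s)
  case (Suc N)
  then show ?case
    using assms unfolding sched_on_def by (auto intro!: sum_nonneg mult_nonneg_nonneg simp: is_mdp_nonneg)
qed (use assms in auto)

lemma horizon_value_le_excessive:
  assumes "is_mdp P" "sched_on E \<sigma>" "\<And>s. E s \<subseteq> enabled P s"
    and "\<And>x. x \<in> G \<Longrightarrow> f x \<le> v x" "\<And>x. x \<notin> G \<Longrightarrow> g x \<le> v x"
    and excessive: "\<And>x \<alpha>. x \<notin> G \<Longrightarrow> \<alpha> \<in> E x \<Longrightarrow> (\<Sum>s'\<in>UNIV. P x \<alpha> s' * v s') \<le> v x"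
  shows "horizon_value P \<sigma> G f g N h s \<le> v s"
proof (induction N arbitrary: h s)
  case 0
  then show ?case using assms by auto
next
  case (Suc N)
  have "(\<Sum>\<alpha>\<in>UNIV. \<sigma> h s \<alpha> * (\<Sum>s'\<in>UNIV. P s \<alpha> s' * horizon_value P \<sigma> G f g N (h @ [(s, \<alpha>)]) s'))
      \<le> v s" if "s \<notin> G"
  proof (rule sched_on_average_le[OF assms(2)])
    fix \<alpha> assume "\<alpha> \<in> E s"
    have "(\<Sum>s'\<in>UNIV. P s \<alpha> s' * horizon_value P \<sigma> G f g N (h @ [(s, \<alpha>)]) s')
        \<le> (\<Sum>s'\<in>UNIV. P s \<alpha> s' * v s')"
      by (intro sum_mono mult_left_mono) (auto simp: Suc is_mdp_nonneg[OF assms(1)])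
    also have "\<dots> \<le> v s" using excessive[OF that \<open>\<alpha> \<in> E s\<close>] .
    finally show "(\<Sum>s'\<in>UNIV. P s \<alpha> s' * horizon_value P \<sigma> G f g N (h @ [(s, \<alpha>)]) s') \<le> v s" .
  qed
  then show ?case using assms(4) by auto
qed

lemma horizon_value_le_const:
  assumes "is_mdp P" "sched_on E \<sigma>" "\<And>s. E s \<subseteq> enabled P s" "\<And>x. f x \<le> c" "\<And>x. g x \<le> c"
  shows "horizon_value P \<sigma> G f g N h s \<le> c"
proof (rule horizon_value_le_excessive[OF assms(1-3), where v = "\<lambda>_. c"])
  fix x \<alpha> assume "\<alpha> \<in> E x"
  then show "(\<Sum>s'\<in>UNIV. P x \<alpha> s' * c) \<le> c"
    using assms(3) enabled_average_const by (metis order_refl subsetD)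
qed (use assms(4,5) in auto)

lemma horizon_value_incseq:
  assumes "is_mdp P" "sched_on E \<sigma>" "\<And>x. 0 \<le> f x"
  shows "incseq (\<lambda>N. horizon_value P \<sigma> G f (\<lambda>_. 0) N h s)"
proof (rule incseq_SucI)
  show "horizon_value P \<sigma> G f (\<lambda>_. 0) N h s \<le> horizon_value P \<sigma> G f (\<lambda>_. 0) (Suc N) h s" for N
  proof (induction N arbitrary: h s)
    case 0
    have "0 \<le> horizon_value P \<sigma> G f (\<lambda>_. 0) (Suc 0) h s"
      by (rule horizon_value_nonneg[OF assms(1,2)]) (simp_all add: assms(3))
    then show ?case
      by (cases "s \<in> G") (simp_all del: horizon_value.simps add: horizon_value.simps(1))
  next
    case (Suc N)
    have "(\<Sum>\<alpha>\<in>UNIV. \<sigma> h s \<alpha> * (\<Sum>s'\<in>UNIV. P s \<alpha> s' * horizon_value P \<sigma> G f (\<lambda>_. 0) N (h @ [(s, \<alpha>)]) s'))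
      \<le> (\<Sum>\<alpha>\<in>UNIV. \<sigma> h s \<alpha> * (\<Sum>s'\<in>UNIV. P s \<alpha> s' * horizon_value P \<sigma> G f (\<lambda>_. 0) (Suc N) (h @ [(s, \<alpha>)]) s'))"
      using Suc assms(2) unfolding sched_on_def
      by (intro sum_mono mult_left_mono) (auto simp: is_mdp_nonneg[OF assms(1)])
    then show ?case
      by (simp del: horizon_value.simps(2)
          add: horizon_value.simps(2)[of _ _ _ _ _ N] horizon_value.simps(2)[of _ _ _ _ _ "Suc N"])
  qed
qed

lemma horizon_value_convergent:
  assumes "is_mdp P" "sched_on E \<sigma>" "\<And>s. E s \<subseteq> enabled P s"
  shows "convergent (\<lambda>N. horizon_value P \<sigma> G w (\<lambda>_. 0) N h s)"
proof -
  have nonneg_case: "convergent (\<lambda>N. horizon_value P \<sigma> G f (\<lambda>_. 0) N h s)" if "\<And>x. 0 \<le> f x" for f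
  proof -
    have Max_nonneg: "0 \<le> Max (range f)"
      using order_trans[OF that Max_ge[OF finite_imageI[OF finite_UNIV] rangeI]] .
    have "horizon_value P \<sigma> G f (\<lambda>_. 0) N h s \<le> Max (range f)" for N
      by (intro horizon_value_le_const[OF assms]) (simp_all add: Max_nonneg)
    then have "bdd_above (range (\<lambda>N. horizon_value P \<sigma> G f (\<lambda>_. 0) N h s))"
      by (intro bdd_aboveI2)
    moreover have "incseq (\<lambda>N. horizon_value P \<sigma> G f (\<lambda>_. 0) N h s)"
      by (rule horizon_value_incseq[OF assms(1,2)]) (rule that)
    ultimately show ?thesis
      unfolding convergent_def by (blast intro: LIMSEQ_incseq_SUP)
  qed
  define wp wn where "wp x = max (w x) 0" and "wn x = max (- w x) 0" for x
  have "horizon_value P \<sigma> G w (\<lambda>_. 0) N h s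
      = horizon_value P \<sigma> G wp (\<lambda>_. 0) N h s + horizon_value P \<sigma> G (\<lambda>x. - wn x) (\<lambda>_. 0) N h s" for N
    by (rule horizon_value_add) (auto simp: wp_def wn_def)
  moreover have "horizon_value P \<sigma> G (\<lambda>x. - wn x) (\<lambda>_. 0) N h s = (- 1) * horizon_value P \<sigma> G wn (\<lambda>_. 0) N h s" for N
    by (rule horizon_value_scale) simp_all
  ultimately have split: "horizon_value P \<sigma> G w (\<lambda>_. 0) N h s
      = horizon_value P \<sigma> G wp (\<lambda>_. 0) N h s - horizon_value P \<sigma> G wn (\<lambda>_. 0) N h s" for N
    by simp
  show ?thesis
    unfolding split by (intro convergent_diff nonneg_case) (simp_all add: wp_def wn_def)
qed

lemma reach_prob_LIMSEQ:
  assumes "is_mdp P" "is_sched P \<sigma>"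
  shows "(\<lambda>N. reach_within P \<sigma> T N [] s) \<longlonglongrightarrow> reach_prob P \<sigma> s T"
proof -
  have sched: "sched_on (enabled P) \<sigma>"
    using assms(2) is_sched_iff_sched_on by blast
  have "reach_within P \<sigma> T N [] s \<le> 1" for N
    unfolding reach_within_eq_horizon_value by (rule horizon_value_le_const[OF assms(1) sched]) auto
  moreover have "incseq (\<lambda>N. reach_within P \<sigma> T N [] s)"
    unfolding reach_within_eq_horizon_value by (rule horizon_value_incseq[OF assms(1) sched]) simp
  ultimately show ?thesis
    unfolding reach_prob_def by (intro LIMSEQ_incseq_SUP bdd_aboveI2)
qed

definition reward_value :: "('s::finite \<Rightarrow> 'a::finite \<Rightarrow> 's \<Rightarrow> real) \<Rightarrow> ('s, 'a) sched \<Rightarrow> 's set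
    \<Rightarrow> ('s \<Rightarrow> real) \<Rightarrow> 's \<Rightarrow> real" where
  "reward_value P \<sigma> G w s = lim (\<lambda>N. horizon_value P \<sigma> G w (\<lambda>_. 0) N [] s)"

lemma reward_value_LIMSEQ:
  assumes "is_mdp P" "sched_on E \<sigma>" "\<And>s. E s \<subseteq> enabled P s"
  shows "(\<lambda>N. horizon_value P \<sigma> G w (\<lambda>_. 0) N [] s) \<longlonglongrightarrow> reward_value P \<sigma> G w s"
  unfolding reward_value_def using horizon_value_convergent[OF assms] convergent_LIMSEQ_iff by blast

lemma reward_value_goal: "s \<in> G \<Longrightarrow> reward_value P \<sigma> G w s = w s"
  unfolding reward_value_def by simp

lemma reward_value_scale:
  assumes "is_mdp P" "sched_on E \<sigma>" "\<And>s. E s \<subseteq> enabled P s"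
  shows "reward_value P \<sigma> G (\<lambda>x. c * w x) s = c * reward_value P \<sigma> G w s"
proof -
  have "horizon_value P \<sigma> G (\<lambda>x. c * w x) (\<lambda>_. 0) N [] s = c * horizon_value P \<sigma> G w (\<lambda>_. 0) N [] s" for N
    by (rule horizon_value_scale) simp_all
  then have "(\<lambda>N. horizon_value P \<sigma> G (\<lambda>x. c * w x) (\<lambda>_. 0) N [] s) \<longlonglongrightarrow> c * reward_value P \<sigma> G w s"
    using tendsto_mult_left[OF reward_value_LIMSEQ[OF assms]] by simp
  then show ?thesis
    unfolding reward_value_def by (rule limI)
qed

lemma reward_value_const:
  assumes "is_mdp P" "is_sched P \<sigma>"
  shows "reward_value P \<sigma> G (\<lambda>_. c) s = c * reach_prob P \<sigma> s G"
proof -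
  have "horizon_value P \<sigma> G (\<lambda>_. c) (\<lambda>_. 0) N [] s = c * reach_within P \<sigma> G N [] s" for N
    unfolding reach_within_eq_horizon_value by (rule horizon_value_scale) simp_all
  then have "(\<lambda>N. horizon_value P \<sigma> G (\<lambda>_. c) (\<lambda>_. 0) N [] s) \<longlonglongrightarrow> c * reach_prob P \<sigma> s G"
    using tendsto_mult_left[OF reach_prob_LIMSEQ[OF assms]] by simp
  then show ?thesis
    unfolding reward_value_def by (rule limI)
qed

section \<open>Memoryless deterministic schedulers\<close>

lemma horizon_value_md_to_sched_Suc:
  "horizon_value P (md_to_sched d) G f g (Suc N) h s = (if s \<in> G then f s else
     (\<Sum>s'\<in>UNIV. P s (d s) s' * horizon_value P (md_to_sched d) G f g N (h @ [(s, d s)]) s'))"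
proof -
  have delta: "(\<lambda>\<alpha>. md_to_sched d h s \<alpha> * X \<alpha>) = (\<lambda>\<alpha>. if \<alpha> = d s then X \<alpha> else 0)"
    for X :: "_ \<Rightarrow> real"
    by (auto simp: md_to_sched_def)
  show ?thesis
    by (simp only: horizon_value.simps(2) delta) simp
qed

lemma horizon_value_md_to_sched_history:
  "horizon_value P (md_to_sched d) G f g N h s = horizon_value P (md_to_sched d) G f g N h' s"
proof (induction N arbitrary: h h' s)
  case (Suc N)
  show ?case
    by (simp only: horizon_value_md_to_sched_Suc Suc.IH[of "h @ [(s, d s)]" _ "h' @ [(s, d s)]"])
qed simp

abbreviation md_value :: "('s::finite \<Rightarrow> 'a::finite \<Rightarrow> 's \<Rightarrow> real) \<Rightarrow> ('s \<Rightarrow> 'a) \<Rightarrow> 's set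
    \<Rightarrow> ('s \<Rightarrow> real) \<Rightarrow> 's \<Rightarrow> real" where
  "md_value P d \<equiv> reward_value P (md_to_sched d)"

lemma md_value_LIMSEQ:
  assumes "is_mdp P" "is_md_sched P d"
  shows "(\<lambda>N. horizon_value P (md_to_sched d) G w (\<lambda>_. 0) N h s) \<longlonglongrightarrow> md_value P d G w s"
  using reward_value_LIMSEQ[OF assms(1) sched_on_md_to_sched] assms(2)
  by (subst horizon_value_md_to_sched_history) (auto simp: is_md_sched_def)

lemma md_value_fixpoint:
  assumes "is_mdp P" "is_md_sched P d" "s \<notin> G"
  shows "md_value P d G w s = (\<Sum>s'\<in>UNIV. P s (d s) s' * md_value P d G w s')"
proof (rule LIMSEQ_unique)
  show "(\<lambda>N. horizon_value P (md_to_sched d) G w (\<lambda>_. 0) (Suc N) [] s) \<longlonglongrightarrow> md_value P d G w s"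
    using LIMSEQ_Suc[OF md_value_LIMSEQ[OF assms(1,2)]] .
  show "(\<lambda>N. horizon_value P (md_to_sched d) G w (\<lambda>_. 0) (Suc N) [] s)
      \<longlonglongrightarrow> (\<Sum>s'\<in>UNIV. P s (d s) s' * md_value P d G w s')"
    unfolding horizon_value_md_to_sched_Suc using assms(3)
    by (simp, intro tendsto_sum tendsto_mult_left md_value_LIMSEQ[OF assms(1,2)])
qed

lemma md_value_trap:
  assumes "\<And>t. t \<in> B \<Longrightarrow> t \<notin> G \<and> (\<forall>s'. P t (d t) s' \<noteq> 0 \<longrightarrow> s' \<in> B)" "t \<in> B"
  shows "md_value P d G w t = 0"
proof -
  have "horizon_value P (md_to_sched d) G w (\<lambda>_. 0) N h t = 0" if "t \<in> B" for N h t
    using that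
  proof (induction N arbitrary: h t)
    case (Suc N)
    have "P t (d t) s' * horizon_value P (md_to_sched d) G w (\<lambda>_. 0) N (h @ [(t, d t)]) s' = 0" for s'
      using Suc assms(1)[OF Suc.prems] by (cases "P t (d t) s' = 0") auto
    then show ?case
      using assms(1)[OF Suc.prems] by (simp only: horizon_value_md_to_sched_Suc) simp
  qed (use assms(1) in auto)
  then show ?thesis
    unfolding reward_value_def using assms(2) by simp
qed

section \<open>Avoiding states\<close>

fun attractor :: "('s::finite \<Rightarrow> 'a::finite \<Rightarrow> 's \<Rightarrow> real) \<Rightarrow> ('s \<Rightarrow> 'a set) \<Rightarrow> 's set \<Rightarrow> nat \<Rightarrow> 's set" where
  "attractor P E G 0 = G"
| "attractor P E G (Suc i) =
     attractor P E G i \<union> {s. \<forall>\<alpha>\<in>E s. \<exists>s'. P s \<alpha> s' \<noteq> 0 \<and> s' \<in> attractor P E G i}"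

definition avoiding_states :: "('s::finite \<Rightarrow> 'a::finite \<Rightarrow> 's \<Rightarrow> real) \<Rightarrow> ('s \<Rightarrow> 'a set) \<Rightarrow> 's set \<Rightarrow> 's set" where
  "avoiding_states P E G = - (\<Union>i. attractor P E G i)"

lemma attractor_mono: "i \<le> j \<Longrightarrow> attractor P E G i \<subseteq> attractor P E G j"
  by (rule lift_Suc_mono_le[of "attractor P E G"]) auto

lemma attractor_saturates: "\<exists>K. - avoiding_states P E G \<subseteq> attractor P E G K"
proof -
  have "\<forall>s\<in>- avoiding_states P E G. \<exists>i. s \<in> attractor P E G i"
    unfolding avoiding_states_def by blast
  then obtain i where i: "\<And>s. s \<in> - avoiding_states P E G \<Longrightarrow> s \<in> attractor P E G (i s)"
    by metis
  have "s \<in> attractor P E G (Max (range i))" if "s \<in> - avoiding_states P E G" for s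
    using i[OF that] attractor_mono[of "i s" "Max (range i)"] by auto
  then show ?thesis by blast
qed

lemma avoiding_states_closed:
  assumes "s \<in> avoiding_states P E G"
  shows "s \<notin> G" "\<exists>\<alpha>\<in>E s. \<forall>s'. P s \<alpha> s' \<noteq> 0 \<longrightarrow> s' \<in> avoiding_states P E G"
proof -
  show "s \<notin> G"
    using assms attractor.simps(1) unfolding avoiding_states_def by blast
  obtain K where K: "- avoiding_states P E G \<subseteq> attractor P E G K"
    using attractor_saturates by blast
  show "\<exists>\<alpha>\<in>E s. \<forall>s'. P s \<alpha> s' \<noteq> 0 \<longrightarrow> s' \<in> avoiding_states P E G"
  proof (rule ccontr)
    assume "\<not> ?thesis"
    then have "s \<in> attractor P E G (Suc K)"
      using K by auto
    then show False
      using assms unfolding avoiding_states_def by blast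
  qed
qed

lemma min_pos_transition:
  assumes "is_mdp P"
  shows "\<exists>p>0. p \<le> 1 \<and> (\<forall>s \<alpha> s'. P s \<alpha> s' \<noteq> 0 \<longrightarrow> p \<le> P s \<alpha> s')"
proof -
  define A where "A = insert 1 ((\<lambda>(s, \<alpha>, s'). P s \<alpha> s') ` {(s, \<alpha>, s'). P s \<alpha> s' \<noteq> 0})"
  have "finite A"
    unfolding A_def by simp
  moreover have "\<forall>x\<in>A. 0 < x"
    unfolding A_def using is_mdp_nonneg[OF assms] by (auto simp: less_le)
  ultimately have "0 < Min A" "Min A \<le> 1" "\<forall>s \<alpha> s'. P s \<alpha> s' \<noteq> 0 \<longrightarrow> Min A \<le> P s \<alpha> s'"
    unfolding A_def by (auto intro!: Min_le image_eqI)
  then show ?thesis by blast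
qed

lemma attractor_reach_lower_bound:
  assumes "is_mdp P" "sched_on E \<sigma>"
    and p: "0 < p" "p \<le> 1" "\<And>s \<alpha> s'. P s \<alpha> s' \<noteq> 0 \<Longrightarrow> p \<le> P s \<alpha> s'"
  shows "s \<in> attractor P E G i \<Longrightarrow> p ^ i \<le> horizon_value P \<sigma> G (\<lambda>_. 1) (\<lambda>_. 0) i h s"
proof (induction i arbitrary: h s)
  case (Suc i)
  have V_nonneg: "0 \<le> horizon_value P \<sigma> G (\<lambda>_. 1) (\<lambda>_. 0) N h' t" for N h' t
    by (rule horizon_value_nonneg[OF assms(1,2)]) simp_all
  consider "s \<in> G" | "s \<notin> G" "s \<in> attractor P E G i"
    | "s \<notin> G" "\<forall>\<alpha>\<in>E s. \<exists>s'. P s \<alpha> s' \<noteq> 0 \<and> s' \<in> attractor P E G i"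
    using Suc.prems by auto
  then show ?case
  proof cases
    case 1
    have "p ^ Suc i \<le> 1"
      using p by (intro power_le_one) auto
    then show ?thesis using 1 by simp
  next
    case 2
    have "p ^ Suc i \<le> p ^ i"
      using p by (intro power_decreasing) auto
    also have "\<dots> \<le> horizon_value P \<sigma> G (\<lambda>_. 1) (\<lambda>_. 0) i h s"
      using Suc.IH[OF 2(2)] .
    also have "\<dots> \<le> horizon_value P \<sigma> G (\<lambda>_. 1) (\<lambda>_. 0) (Suc i) h s"
      by (rule incseq_SucD, rule horizon_value_incseq[OF assms(1,2)]) simp
    finally show ?thesis .
  next
    case 3
    have "p ^ Suc i \<le> (\<Sum>\<alpha>\<in>UNIV. \<sigma> h s \<alpha> *
        (\<Sum>s'\<in>UNIV. P s \<alpha> s' * horizon_value P \<sigma> G (\<lambda>_. 1) (\<lambda>_. 0) i (h @ [(s, \<alpha>)]) s'))"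
    proof (rule sched_on_average_ge[OF assms(2)])
      fix \<alpha> assume "\<alpha> \<in> E s"
      then obtain s' where s': "P s \<alpha> s' \<noteq> 0" "s' \<in> attractor P E G i"
        using 3 by blast
      have "p ^ Suc i = p * p ^ i"
        by simp
      also have "\<dots> \<le> P s \<alpha> s' * horizon_value P \<sigma> G (\<lambda>_. 1) (\<lambda>_. 0) i (h @ [(s, \<alpha>)]) s'"
        using p(3)[OF s'(1)] Suc.IH[OF s'(2)] p by (intro mult_mono) auto
      also have "\<dots> \<le> (\<Sum>s''\<in>UNIV. P s \<alpha> s'' * horizon_value P \<sigma> G (\<lambda>_. 1) (\<lambda>_. 0) i (h @ [(s, \<alpha>)]) s'')"
        by (rule member_le_sum) (auto intro: mult_nonneg_nonneg is_mdp_nonneg[OF assms(1)] V_nonneg)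
      finally show "p ^ Suc i \<le> (\<Sum>s''\<in>UNIV. P s \<alpha> s'' * horizon_value P \<sigma> G (\<lambda>_. 1) (\<lambda>_. 0) i (h @ [(s, \<alpha>)]) s'')" .
    qed
    then show ?thesis
      using 3(1) by simp
  qed
qed simp

text \<open>From a state that is neither in G nor avoiding, G is reached within K steps with probability
  at least p ^ K.\<close>

lemma escape_bound:
  assumes "is_mdp P" "sched_on E \<sigma>"
    and p: "0 < p" "p \<le> 1" "\<And>s \<alpha> s'. P s \<alpha> s' \<noteq> 0 \<Longrightarrow> p \<le> P s \<alpha> s'"
    and K: "- avoiding_states P E G \<subseteq> attractor P E G K"
  shows "p ^ K * horizon_value P \<sigma> G (\<lambda>_. 0) (\<lambda>x. of_bool (x \<notin> avoiding_states P E G)) N h s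
     \<le> horizon_value P \<sigma> G (\<lambda>_. 1) (\<lambda>_. 0) (N + K) h s - horizon_value P \<sigma> G (\<lambda>_. 1) (\<lambda>_. 0) N h s"
proof (induction N arbitrary: h s)
  case 0
  have "0 \<le> horizon_value P \<sigma> G (\<lambda>_. 1) (\<lambda>_. 0) K h s"
    by (rule horizon_value_nonneg[OF assms(1,2)]) simp_all
  moreover have "p ^ K \<le> horizon_value P \<sigma> G (\<lambda>_. 1) (\<lambda>_. 0) K h s" if "s \<notin> avoiding_states P E G"
    using attractor_reach_lower_bound[OF assms(1,2) p] K that by blast
  ultimately show ?case
    by (cases "s \<in> G") auto
next
  case (Suc N)
  let ?Q = "horizon_value P \<sigma> G (\<lambda>_. 0) (\<lambda>x. of_bool (x \<notin> avoiding_states P E G)) N"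
  let ?R = "\<lambda>M. horizon_value P \<sigma> G (\<lambda>_. 1) (\<lambda>_. 0) M"
  have "p ^ K * (\<Sum>\<alpha>\<in>UNIV. \<sigma> h s \<alpha> * (\<Sum>s'\<in>UNIV. P s \<alpha> s' * ?Q (h @ [(s, \<alpha>)]) s'))
     = (\<Sum>\<alpha>\<in>UNIV. \<sigma> h s \<alpha> * (\<Sum>s'\<in>UNIV. P s \<alpha> s' * (p ^ K * ?Q (h @ [(s, \<alpha>)]) s')))"
    by (simp add: sum_distrib_left mult.left_commute)
  also have "\<dots> \<le> (\<Sum>\<alpha>\<in>UNIV. \<sigma> h s \<alpha> *
      (\<Sum>s'\<in>UNIV. P s \<alpha> s' * (?R (N + K) (h @ [(s, \<alpha>)]) s' - ?R N (h @ [(s, \<alpha>)]) s')))"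
    using Suc.IH assms(2) unfolding sched_on_def
    by (intro sum_mono mult_left_mono) (auto simp: is_mdp_nonneg[OF assms(1)])
  also have "\<dots> = (\<Sum>\<alpha>\<in>UNIV. \<sigma> h s \<alpha> * (\<Sum>s'\<in>UNIV. P s \<alpha> s' * ?R (N + K) (h @ [(s, \<alpha>)]) s'))
     - (\<Sum>\<alpha>\<in>UNIV. \<sigma> h s \<alpha> * (\<Sum>s'\<in>UNIV. P s \<alpha> s' * ?R N (h @ [(s, \<alpha>)]) s'))"
    by (simp only: right_diff_distrib sum_subtractf)
  finally show ?case
    by (cases "s \<in> G") simp_all
qed

lemma escape_LIMSEQ:
  assumes "is_mdp P" "sched_on E \<sigma>" "\<And>s. E s \<subseteq> enabled P s"
  shows "(\<lambda>N. horizon_value P \<sigma> G (\<lambda>_. 0) (\<lambda>x. of_bool (x \<notin> avoiding_states P E G)) N h s) \<longlonglongrightarrow> 0"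
proof -
  obtain p where p: "0 < p" "p \<le> 1" "\<And>s \<alpha> s'. P s \<alpha> s' \<noteq> 0 \<Longrightarrow> p \<le> P s \<alpha> s'"
    using min_pos_transition[OF assms(1)] by blast
  obtain K where K: "- avoiding_states P E G \<subseteq> attractor P E G K"
    using attractor_saturates by blast
  let ?R = "\<lambda>N. horizon_value P \<sigma> G (\<lambda>_. 1) (\<lambda>_. 0) N h s"
  let ?Q = "\<lambda>N. horizon_value P \<sigma> G (\<lambda>_. 0) (\<lambda>x. of_bool (x \<notin> avoiding_states P E G)) N h s"
  obtain r where "?R \<longlonglongrightarrow> r"
    using horizon_value_convergent[OF assms] convergent_def by blast
  then have "(\<lambda>N. (?R (N + K) - ?R N) / p ^ K) \<longlonglongrightarrow> (r - r) / p ^ K"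
    using p(1) by (intro tendsto_intros LIMSEQ_ignore_initial_segment) auto
  then have upper: "(\<lambda>N. (?R (N + K) - ?R N) / p ^ K) \<longlonglongrightarrow> 0"
    by simp
  have "0 \<le> ?Q N" for N
    by (rule horizon_value_nonneg[OF assms(1,2)]) simp_all
  moreover have "?Q N \<le> (?R (N + K) - ?R N) / p ^ K" for N
    using escape_bound[OF assms(1,2) p K, of N h s] p(1) by (simp add: le_divide_eq mult.commute)
  ultimately show ?thesis
    by (intro real_tendsto_sandwich[OF _ _ tendsto_const upper]) auto
qed

section \<open>Optimal memoryless deterministic schedulers\<close>

lemma reward_value_le_excessive:
  assumes "is_mdp P" "sched_on E \<sigma>" "\<And>s. E s \<subseteq> enabled P s"
    and goal: "\<And>x. x \<in> G \<Longrightarrow> v x = w x"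
    and excessive: "\<And>x \<alpha>. x \<notin> G \<Longrightarrow> \<alpha> \<in> E x \<Longrightarrow> (\<Sum>s'\<in>UNIV. P x \<alpha> s' * v s') \<le> v x"
    and nonneg: "\<And>x. x \<in> avoiding_states P E G \<Longrightarrow> 0 \<le> v x"
  shows "reward_value P \<sigma> G w s \<le> v s"
proof -
  define escape :: "_ \<Rightarrow> real" where "escape x = of_bool (x \<notin> avoiding_states P E G)" for x
  define M where "M = (\<Sum>x\<in>UNIV. \<bar>v x\<bar>)"
  have v_le_M: "\<bar>v x\<bar> \<le> M" for x
    unfolding M_def by (rule member_le_sum) auto
  \<comment> \<open>Where v is negative, the error is at most M times the escape probability, which vanishes.\<close>
  have bound: "horizon_value P \<sigma> G w (\<lambda>_. 0) N [] s \<le> v s + M * horizon_value P \<sigma> G (\<lambda>_. 0) escape N [] s" for N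
  proof -
    have "horizon_value P \<sigma> G w (\<lambda>_. 0) N [] s \<le> horizon_value P \<sigma> G w (\<lambda>x. v x + M * escape x) N [] s"
    proof (rule horizon_value_mono[OF assms(1,2)])
      fix x
      show "0 \<le> v x + M * escape x"
        using nonneg[of x] v_le_M[of x] by (cases "x \<in> avoiding_states P E G") (auto simp: escape_def)
    qed simp
    also have "\<dots> = horizon_value P \<sigma> G w v N [] s + horizon_value P \<sigma> G (\<lambda>_. 0) (\<lambda>x. M * escape x) N [] s"
      by (rule horizon_value_add) simp_all
    also have "horizon_value P \<sigma> G (\<lambda>_. 0) (\<lambda>x. M * escape x) N [] s = M * horizon_value P \<sigma> G (\<lambda>_. 0) escape N [] s"
      by (rule horizon_value_scale) simp_all
    also have "horizon_value P \<sigma> G w v N [] s \<le> v s"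
      by (rule horizon_value_le_excessive[OF assms(1-3)]) (use goal excessive in auto)
    finally show ?thesis by simp
  qed
  have "(\<lambda>N. v s + M * horizon_value P \<sigma> G (\<lambda>_. 0) escape N [] s) \<longlonglongrightarrow> v s + M * 0"
    unfolding escape_def by (intro tendsto_intros escape_LIMSEQ[OF assms(1-3)])
  then show ?thesis
    using LIMSEQ_le[OF reward_value_LIMSEQ[OF assms(1-3)]] bound by fastforce
qed

lemma md_value_ge_subharmonic:
  assumes "is_mdp P" "is_md_sched P d"
    and "\<And>x. x \<in> G \<Longrightarrow> u x = w x"
    and "\<And>x. x \<notin> G \<Longrightarrow> u x \<le> (\<Sum>s'\<in>UNIV. P x (d x) s' * u s')"
    and "\<And>x. x \<in> avoiding_states P (\<lambda>x. {d x}) G \<Longrightarrow> u x \<le> 0"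
  shows "u s \<le> md_value P d G w s"
proof -
  have enabled: "\<And>s. {d s} \<subseteq> enabled P s"
    using assms(2) by (auto simp: is_md_sched_def)
  have "reward_value P (md_to_sched d) G (\<lambda>x. - 1 * w x) s \<le> - u s"
    by (rule reward_value_le_excessive[OF assms(1) sched_on_md_to_sched enabled])
       (use assms(3-5) in \<open>auto simp: sum_negf\<close>)
  then show ?thesis
    using reward_value_scale[OF assms(1) sched_on_md_to_sched enabled, of G "- 1" w s] by simp
qed

lemma subharmonic_at_max:
  assumes "is_mdp P" "\<alpha> \<in> enabled P x"
    and "\<And>s'. P x \<alpha> s' \<noteq> 0 \<Longrightarrow> u s' \<le> u x" "u x \<le> (\<Sum>s'\<in>UNIV. P x \<alpha> s' * u s')"
  shows "(\<Sum>s'\<in>UNIV. P x \<alpha> s' * u s') = u x" "\<And>s'. P x \<alpha> s' \<noteq> 0 \<Longrightarrow> u s' = u x"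
proof -
  have "(\<Sum>s'\<in>UNIV. P x \<alpha> s' * u s') \<le> u x"
    by (rule transition_average_le[OF assms(1,2)]) (rule assms(3))
  then show "(\<Sum>s'\<in>UNIV. P x \<alpha> s' * u s') = u x"
    using assms(4) by linarith
  show "u s' = u x" if "P x \<alpha> s' \<noteq> 0" for s'
    using is_mdp_nonneg[OF assms(1)] enabled_sum_eq_1[OF assms(2)] assms(3,4) that
    by (rule weighted_average_eq_max)
qed

lemma subharmonic_argmax_closed:
  assumes mdp: "is_mdp P"
    and closed: "\<And>x. x \<in> C \<Longrightarrow> a x \<in> enabled P x \<and> (\<forall>s'. P x (a x) s' \<noteq> 0 \<longrightarrow> s' \<in> C)"
    and subharmonic: "\<And>x. x \<in> C \<Longrightarrow> u x \<le> (\<Sum>s'\<in>UNIV. P x (a x) s' * u s')"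
    and "x \<in> C" "\<And>y. y \<in> C \<Longrightarrow> u y \<le> u x"
  shows "(\<Sum>s'\<in>UNIV. P x (a x) s' * u s') = u x" "\<forall>s'. P x (a x) s' \<noteq> 0 \<longrightarrow> s' \<in> C \<and> u s' = u x"
proof -
  have enabled: "a x \<in> enabled P x"
    using closed[OF assms(4)] by blast
  have at_max: "\<And>s'. P x (a x) s' \<noteq> 0 \<Longrightarrow> u s' \<le> u x"
    using closed[OF assms(4)] assms(5) by blast
  show "(\<Sum>s'\<in>UNIV. P x (a x) s' * u s') = u x"
    by (rule subharmonic_at_max(1)[OF mdp enabled at_max subharmonic[OF assms(4)]])
  show "\<forall>s'. P x (a x) s' \<noteq> 0 \<longrightarrow> s' \<in> C \<and> u s' = u x"
    using subharmonic_at_max(2)[OF mdp enabled at_max subharmonic[OF assms(4)]] closed[OF assms(4)]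
    by blast
qed

text \<open>The maximum of the old value over the states where d' avoids G is attained on a trap of d,
  where the old value is 0.\<close>

lemma md_value_nonpos_on_avoiding_states:
  assumes mdp: "is_mdp P" and d': "is_md_sched P d'"
    and improving: "\<And>x. x \<notin> G \<Longrightarrow> md_value P d G w x \<le> (\<Sum>s'\<in>UNIV. P x (d' x) s' * md_value P d G w s')"
    and switching: "\<And>x. x \<notin> G \<Longrightarrow> d' x \<noteq> d x \<Longrightarrow>
        md_value P d G w x < (\<Sum>s'\<in>UNIV. P x (d' x) s' * md_value P d G w s') \<or> md_value P d G w x \<le> 0"
    and "t \<in> avoiding_states P (\<lambda>x. {d' x}) G"
  shows "md_value P d G w t \<le> 0"
proof (rule ccontr)
  let ?u = "md_value P d G w"
  let ?C = "avoiding_states P (\<lambda>x. {d' x}) G"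
  assume "\<not> ?u t \<le> 0"
  define m where "m = Max (?u ` ?C)"
  define B where "B = {x \<in> ?C. ?u x = m}"
  have le_m: "?u y \<le> m" if "y \<in> ?C" for y
    unfolding m_def using that by simp
  have m_pos: "0 < m"
    using le_m[OF assms(5)] \<open>\<not> ?u t \<le> 0\<close> by simp
  have "m \<in> ?u ` ?C"
    unfolding m_def using assms(5) by (intro Max_in) auto
  then obtain t' where "t' \<in> B"
    unfolding B_def by auto
  have closed: "\<And>x. x \<in> ?C \<Longrightarrow> d' x \<in> enabled P x \<and> (\<forall>s'. P x (d' x) s' \<noteq> 0 \<longrightarrow> s' \<in> ?C)"
    using d' avoiding_states_closed(2) by (fastforce simp: is_md_sched_def)
  have subharmonic: "\<And>x. x \<in> ?C \<Longrightarrow> ?u x \<le> (\<Sum>s'\<in>UNIV. P x (d' x) s' * ?u s')"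
    using improving avoiding_states_closed(1) by blast
  have B_trap: "x \<notin> G \<and> (\<forall>s'. P x (d x) s' \<noteq> 0 \<longrightarrow> s' \<in> B)" if "x \<in> B" for x
  proof -
    have x: "x \<in> ?C" "?u x = m" "x \<notin> G"
      using that avoiding_states_closed(1) unfolding B_def by auto
    have average: "(\<Sum>s'\<in>UNIV. P x (d' x) s' * ?u s') = ?u x"
      by (rule subharmonic_argmax_closed(1)[OF mdp]) (fact closed, fact subharmonic, fact x(1), use le_m x(2) in simp)
    have successors: "\<forall>s'. P x (d' x) s' \<noteq> 0 \<longrightarrow> s' \<in> ?C \<and> ?u s' = ?u x"
      by (rule subharmonic_argmax_closed(2)[OF mdp]) (fact closed, fact subharmonic, fact x(1), use le_m x(2) in simp)
    have "d' x = d x"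
    proof (rule ccontr)
      assume "d' x \<noteq> d x"
      from switching[OF x(3) this] show False
        using average x(2) m_pos by linarith
    qed
    then show ?thesis
      using successors x unfolding B_def by auto
  qed
  have "?u t' = 0"
    using md_value_trap[where B = B and d = d] B_trap \<open>t' \<in> B\<close> by blast
  then show False
    using \<open>t' \<in> B\<close> m_pos unfolding B_def by simp
qed

lemma policy_improvement:
  assumes mdp: "is_mdp P" and d': "is_md_sched P d'"
    and improving: "\<And>x. x \<notin> G \<Longrightarrow> md_value P d G w x \<le> (\<Sum>s'\<in>UNIV. P x (d' x) s' * md_value P d G w s')"
    and switching: "\<And>x. x \<notin> G \<Longrightarrow> d' x \<noteq> d x \<Longrightarrow>
        md_value P d G w x < (\<Sum>s'\<in>UNIV. P x (d' x) s' * md_value P d G w s') \<or> md_value P d G w x \<le> 0"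
  shows "md_value P d G w s \<le> md_value P d' G w s"
  using md_value_ge_subharmonic[OF mdp d' reward_value_goal improving]
    md_value_nonpos_on_avoiding_states[OF mdp d' improving switching] by blast

definition md_undominated :: "('s::finite \<Rightarrow> 'a::finite \<Rightarrow> 's \<Rightarrow> real) \<Rightarrow> 's set \<Rightarrow> ('s \<Rightarrow> real)
    \<Rightarrow> ('s \<Rightarrow> 'a) \<Rightarrow> bool" where
  "md_undominated P G w d \<longleftrightarrow> is_md_sched P d \<and>
     (\<forall>d'. is_md_sched P d' \<longrightarrow> (\<forall>x. md_value P d G w x \<le> md_value P d' G w x)
        \<longrightarrow> md_value P d' G w = md_value P d G w)"

lemma md_undominated_exists:
  assumes "is_mdp P"
  shows "\<exists>d. md_undominated P G w d"
proof -
  define D where "D = {d. is_md_sched P d}"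
  define total where "total d = (\<Sum>x\<in>UNIV. md_value P d G w x)" for d
  have "finite (total ` D)"
    by simp
  moreover have "(\<lambda>s. SOME \<alpha>. \<alpha> \<in> enabled P s) \<in> D"
    using assms unfolding D_def is_md_sched_def is_mdp_def by (simp add: some_in_eq)
  ultimately obtain d where d: "d \<in> D" "total d = Max (total ` D)"
    using Max_in[of "total ` D"] by fastforce
  have d_max: "total d' \<le> total d" if "d' \<in> D" for d'
    unfolding d(2) using \<open>finite (total ` D)\<close> that by simp
  have "md_value P d' G w = md_value P d G w"
    if d': "is_md_sched P d'" and le: "\<forall>x. md_value P d G w x \<le> md_value P d' G w x" for d'
  proof (rule ext, rule ccontr)
    fix x assume "md_value P d' G w x \<noteq> md_value P d G w x"
    then have "md_value P d G w x < md_value P d' G w x"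
      using le by (simp add: order.strict_iff_order)
    then have "total d < total d'"
      unfolding total_def using le by (intro sum_strict_mono_ex1) auto
    then show False
      using d_max[of d'] d' unfolding D_def by simp
  qed
  then show ?thesis
    using d(1) unfolding md_undominated_def D_def by blast
qed

lemma md_undominated_excessive:
  assumes mdp: "is_mdp P" and undominated: "md_undominated P G w d"
    and "x \<notin> G" "\<alpha> \<in> enabled P x"
  shows "(\<Sum>s'\<in>UNIV. P x \<alpha> s' * md_value P d G w s') \<le> md_value P d G w x"
proof (rule ccontr)
  let ?v = "md_value P d G w"
  assume gain: "\<not> ?thesis"
  define d' where "d' = d(x := \<alpha>)"
  have d: "is_md_sched P d"
    using undominated unfolding md_undominated_def by blast
  have d': "is_md_sched P d'"
    using d assms(4) unfolding d'_def is_md_sched_def by auto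
  have "?v y \<le> md_value P d' G w y" for y
  proof (rule policy_improvement[OF mdp d'])
    fix z assume "z \<notin> G"
    then show "?v z \<le> (\<Sum>s'\<in>UNIV. P z (d' z) s' * ?v s')"
      using md_value_fixpoint[OF mdp d, of z] gain unfolding d'_def by (cases "z = x") auto
  next
    fix z assume "z \<notin> G" "d' z \<noteq> d z"
    then show "?v z < (\<Sum>s'\<in>UNIV. P z (d' z) s' * ?v s') \<or> ?v z \<le> 0"
      using gain unfolding d'_def by (cases "z = x") auto
  qed
  then have same: "md_value P d' G w = ?v"
    using undominated d' unfolding md_undominated_def by blast
  have "md_value P d' G w x = (\<Sum>s'\<in>UNIV. P x \<alpha> s' * md_value P d' G w s')"
    using md_value_fixpoint[OF mdp d' assms(3), of w] by (simp add: d'_def)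
  then show False
    using gain unfolding same by simp
qed

lemma excessive_argmin_trap:
  assumes mdp: "is_mdp P"
    and excessive: "\<And>x \<alpha>. x \<notin> G \<Longrightarrow> \<alpha> \<in> enabled P x \<Longrightarrow> (\<Sum>s'\<in>UNIV. P x \<alpha> s' * v s') \<le> v x"
    and "t \<in> avoiding_states P (enabled P) G"
  obtains B stay where "B \<noteq> {}" "\<And>x. x \<in> B \<Longrightarrow> x \<notin> G \<and> v x \<le> v t"
    "\<And>x. x \<in> B \<Longrightarrow> stay x \<in> enabled P x \<and> (\<Sum>s'\<in>UNIV. P x (stay x) s' * v s') = v x
      \<and> (\<forall>s'. P x (stay x) s' \<noteq> 0 \<longrightarrow> s' \<in> B)"
proof -
  let ?C = "avoiding_states P (enabled P) G"
  define B where "B = {x \<in> ?C. v x = Min (v ` ?C)}"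
  obtain stay where stay: "\<And>x. x \<in> ?C \<Longrightarrow> stay x \<in> enabled P x \<and> (\<forall>s'. P x (stay x) s' \<noteq> 0 \<longrightarrow> s' \<in> ?C)"
    using avoiding_states_closed(2) by metis
  have subharmonic: "- v x \<le> (\<Sum>s'\<in>UNIV. P x (stay x) s' * - v s')" if "x \<in> ?C" for x
    using excessive[OF avoiding_states_closed(1)[OF that]] stay[OF that] by (simp add: sum_negf)
  have "Min (v ` ?C) \<in> v ` ?C"
    using assms(3) by (intro Min_in) auto
  then have "B \<noteq> {}"
    unfolding B_def by auto
  moreover have "x \<notin> G \<and> v x \<le> v t" if "x \<in> B" for x
    using that assms(3) avoiding_states_closed(1) unfolding B_def by auto
  moreover have "stay x \<in> enabled P x \<and> (\<Sum>s'\<in>UNIV. P x (stay x) s' * v s') = v x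
      \<and> (\<forall>s'. P x (stay x) s' \<noteq> 0 \<longrightarrow> s' \<in> B)" if "x \<in> B" for x
  proof -
    have x: "x \<in> ?C" "\<And>y. y \<in> ?C \<Longrightarrow> - v y \<le> - v x"
      using that unfolding B_def by auto
    have "(\<Sum>s'\<in>UNIV. P x (stay x) s' * - v s') = - v x"
      by (rule subharmonic_argmax_closed(1)[OF mdp]) (fact stay, fact subharmonic, fact x(1), fact x(2))
    moreover have "\<forall>s'. P x (stay x) s' \<noteq> 0 \<longrightarrow> s' \<in> ?C \<and> - v s' = - v x"
      by (rule subharmonic_argmax_closed(2)[OF mdp]) (fact stay, fact subharmonic, fact x(1), fact x(2))
    ultimately show ?thesis
      using stay[OF x(1)] that unfolding B_def by (simp add: sum_negf)
  qed
  ultimately show ?thesis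
    using that by blast
qed

lemma md_undominated_nonneg:
  assumes mdp: "is_mdp P" and undominated: "md_undominated P G w d"
    and "t \<in> avoiding_states P (enabled P) G"
  shows "0 \<le> md_value P d G w t"
proof (rule ccontr)
  let ?v = "md_value P d G w"
  assume "\<not> 0 \<le> ?v t"
  have d: "is_md_sched P d"
    using undominated unfolding md_undominated_def by blast
  obtain B stay where "B \<noteq> {}" and B_min: "\<And>x. x \<in> B \<Longrightarrow> x \<notin> G \<and> ?v x \<le> ?v t"
    and B_stay: "\<And>x. x \<in> B \<Longrightarrow> stay x \<in> enabled P x \<and> (\<Sum>s'\<in>UNIV. P x (stay x) s' * ?v s') = ?v x
      \<and> (\<forall>s'. P x (stay x) s' \<noteq> 0 \<longrightarrow> s' \<in> B)"
    using excessive_argmin_trap[OF mdp _ assms(3)] md_undominated_excessive[OF mdp undominated] by blast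
  have B_neg: "x \<notin> G \<and> ?v x < 0" if "x \<in> B" for x
    using B_min[OF that] \<open>\<not> 0 \<le> ?v t\<close> by linarith
  \<comment> \<open>Staying in the set B of minimal, negative value turns B into a trap of value 0.\<close>
  define d' where "d' x = (if x \<in> B then stay x else d x)" for x
  have d': "is_md_sched P d'"
    using d B_stay unfolding d'_def is_md_sched_def by auto
  have "?v y \<le> md_value P d' G w y" for y
  proof (rule policy_improvement[OF mdp d'])
    fix z assume "z \<notin> G"
    then show "?v z \<le> (\<Sum>s'\<in>UNIV. P z (d' z) s' * ?v s')"
      using B_stay md_value_fixpoint[OF mdp d \<open>z \<notin> G\<close>] unfolding d'_def by (cases "z \<in> B") auto
  next
    fix z assume "z \<notin> G" "d' z \<noteq> d z"
    then show "?v z < (\<Sum>s'\<in>UNIV. P z (d' z) s' * ?v s') \<or> ?v z \<le> 0"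
      using B_neg[of z] unfolding d'_def by (cases "z \<in> B") auto
  qed
  then have same: "md_value P d' G w = ?v"
    using undominated d' unfolding md_undominated_def by blast
  obtain t' where "t' \<in> B"
    using \<open>B \<noteq> {}\<close> by blast
  have B_trap: "x \<notin> G \<and> (\<forall>s'. P x (d' x) s' \<noteq> 0 \<longrightarrow> s' \<in> B)" if "x \<in> B" for x
    using B_neg[OF that] B_stay[OF that] that unfolding d'_def by simp
  have "md_value P d' G w t' = 0"
    using md_value_trap[where B = B and d = d'] B_trap \<open>t' \<in> B\<close> by blast
  then show False
    using same B_neg[OF \<open>t' \<in> B\<close>] by simp
qed

lemma md_optimal_reward:
  assumes "is_mdp P"
  shows "\<exists>d. is_md_sched P d \<and> (\<forall>\<sigma> s. is_sched P \<sigma> \<longrightarrow> reward_value P \<sigma> G w s \<le> md_value P d G w s)"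
proof -
  obtain d where d: "md_undominated P G w d"
    using md_undominated_exists[OF assms] by blast
  have "reward_value P \<sigma> G w s \<le> md_value P d G w s" if "is_sched P \<sigma>" for \<sigma> s
    using that unfolding is_sched_iff_sched_on
    by (intro reward_value_le_excessive[OF assms]) 
       (auto intro: reward_value_goal md_undominated_excessive[OF assms d] md_undominated_nonneg[OF assms d])
  then show ?thesis
    using d unfolding md_undominated_def by blast
qed

section \<open>Reachability objectives\<close>

lemma md_optimal_reach:
  assumes "is_mdp P"
  shows "\<exists>d. is_md_sched P d \<and>
    (\<forall>\<sigma> s. is_sched P \<sigma> \<longrightarrow> c * reach_prob P \<sigma> s G \<le> c * reach_prob P (md_to_sched d) s G)"
proof -
  obtain d where d: "is_md_sched P d"
    and optimal: "\<And>\<sigma> s. is_sched P \<sigma> \<Longrightarrow> reward_value P \<sigma> G (\<lambda>_. c) s \<le> md_value P d G (\<lambda>_. c) s"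
    using md_optimal_reward[OF assms] by blast
  have "c * reach_prob P \<sigma> s G \<le> c * reach_prob P (md_to_sched d) s G" if "is_sched P \<sigma>" for \<sigma> s
    using optimal[OF that, of s] reward_value_const[OF assms that]
      reward_value_const[OF assms is_sched_md_to_sched[OF d]] by simp
  then show ?thesis
    using d by blast
qed

lemma absorbing_successor:
  assumes "is_mdp P" "absorbing_set P A" "t \<in> A" "\<alpha> \<in> enabled P t" "P t \<alpha> s' \<noteq> 0"
  shows "s' = t"
proof (rule ccontr)
  assume "s' \<noteq> t"
  have "(\<Sum>x\<in>UNIV. P t \<alpha> x) = P t \<alpha> t + (\<Sum>x\<in>UNIV - {t}. P t \<alpha> x)"
    by (simp add: sum.remove)
  moreover have "P t \<alpha> t = 1"
    using assms(2-4) unfolding absorbing_set_def by blast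
  ultimately have "(\<Sum>x\<in>UNIV - {t}. P t \<alpha> x) = 0"
    using enabled_sum_eq_1[OF assms(4)] by simp
  then have "P t \<alpha> s' = 0"
    using \<open>s' \<noteq> t\<close> is_mdp_nonneg[OF assms(1)] by (simp add: sum_nonneg_eq_0_iff)
  with assms(5) show False ..
qed

lemma reach_within_absorbing_outside:
  assumes "is_mdp P" "is_sched P \<sigma>" "absorbing_set P A" "t \<in> A" "t \<notin> T"
  shows "reach_within P \<sigma> T N h t = 0"
proof (induction N arbitrary: h)
  case (Suc N)
  have "\<sigma> h t \<alpha> * (\<Sum>s'\<in>UNIV. P t \<alpha> s' * reach_within P \<sigma> T N (h @ [(t, \<alpha>)]) s') = 0" for \<alpha>
  proof (cases "\<sigma> h t \<alpha> = 0")
    case False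
    then have "\<alpha> \<in> enabled P t"
      using assms(2) unfolding is_sched_def by blast
    then have "P t \<alpha> s' * reach_within P \<sigma> T N (h @ [(t, \<alpha>)]) s' = 0" for s'
      using absorbing_successor[OF assms(1,3,4)] Suc.IH by (cases "P t \<alpha> s' = 0") auto
    then show ?thesis
      by (simp only: sum.neutral_const mult_zero_right)
  qed simp
  then show ?case
    using assms(5) by (simp only: reach_within.simps if_False sum.neutral_const)
qed (use assms(5) in simp)

lemma weighted_reach_within_absorbing:
  assumes "is_mdp P" "is_sched P \<sigma>" "finite I" "\<And>i. i \<in> I \<Longrightarrow> absorbing_set P (T i)"
  shows "(\<Sum>i\<in>I. q i * reach_within P \<sigma> (T i) N h s)
    = horizon_value P \<sigma> (\<Union>i\<in>I. T i) (\<lambda>t. \<Sum>i\<in>I. q i * of_bool (t \<in> T i)) (\<lambda>_. 0) N h s"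
proof (induction N arbitrary: h s)
  case 0
  then show ?case by (auto intro: sum.neutral simp: of_bool_def)
next
  case (Suc N)
  show ?case
  proof (cases "s \<in> (\<Union>i\<in>I. T i)")
    case True
    then obtain i0 where i0: "i0 \<in> I" "s \<in> T i0"
      by blast
    have "reach_within P \<sigma> (T i) (Suc N) h s = of_bool (s \<in> T i)" for i
    proof (cases "s \<in> T i")
      case False
      then show ?thesis
        unfolding reach_within_absorbing_outside[OF assms(1,2) assms(4)[OF i0(1)] i0(2) False] by simp
    qed simp
    then show ?thesis
      using True by (simp add: of_bool_def)
  next
    case False
    let ?R = "\<lambda>i \<alpha> s'. reach_within P \<sigma> (T i) N (h @ [(s, \<alpha>)]) s'"
    have "(\<Sum>i\<in>I. q i * reach_within P \<sigma> (T i) (Suc N) h s)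
      = (\<Sum>i\<in>I. q i * (\<Sum>\<alpha>\<in>UNIV. \<sigma> h s \<alpha> * (\<Sum>s'\<in>UNIV. P s \<alpha> s' * ?R i \<alpha> s')))"
      using False by (intro sum.cong) auto
    also have "\<dots> = (\<Sum>\<alpha>\<in>UNIV. \<sigma> h s \<alpha> * (\<Sum>s'\<in>UNIV. P s \<alpha> s' * (\<Sum>i\<in>I. q i * ?R i \<alpha> s')))"
      by (simp only: sum_distrib_left sum.swap[of _ I] mult.left_commute)
    finally show ?thesis
      using False by (simp add: Suc.IH)
  qed
qed

lemma md_optimal_weighted_reach_absorbing:
  assumes "is_mdp P" "finite I" "\<And>i. i \<in> I \<Longrightarrow> absorbing_set P (T i)"
  shows "\<exists>d. is_md_sched P d \<and> (\<forall>\<sigma> s. is_sched P \<sigma> \<longrightarrow>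
    (\<Sum>i\<in>I. q i * reach_prob P \<sigma> s (T i)) \<le> (\<Sum>i\<in>I. q i * reach_prob P (md_to_sched d) s (T i)))"
proof -
  let ?G = "\<Union>i\<in>I. T i"
  let ?w = "\<lambda>t. \<Sum>i\<in>I. q i * of_bool (t \<in> T i)"
  have reward_eq: "reward_value P \<sigma> ?G ?w s = (\<Sum>i\<in>I. q i * reach_prob P \<sigma> s (T i))"
    if "is_sched P \<sigma>" for \<sigma> s
  proof -
    have "(\<lambda>N. \<Sum>i\<in>I. q i * reach_within P \<sigma> (T i) N [] s) \<longlonglongrightarrow> (\<Sum>i\<in>I. q i * reach_prob P \<sigma> s (T i))"
      by (intro tendsto_sum tendsto_mult_left reach_prob_LIMSEQ[OF assms(1) that])
    moreover have "horizon_value P \<sigma> ?G ?w (\<lambda>_. 0) N [] s = (\<Sum>i\<in>I. q i * reach_within P \<sigma> (T i) N [] s)" for N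
      using weighted_reach_within_absorbing[OF assms(1) that assms(2,3)] by simp
    ultimately show ?thesis
      unfolding reward_value_def by (simp add: limI)
  qed
  obtain d where d: "is_md_sched P d"
    and optimal: "\<And>\<sigma> s. is_sched P \<sigma> \<Longrightarrow> reward_value P \<sigma> ?G ?w s \<le> md_value P d ?G ?w s"
    using md_optimal_reward[OF assms(1)] by blast
  have "(\<Sum>i\<in>I. q i * reach_prob P \<sigma> s (T i)) \<le> (\<Sum>i\<in>I. q i * reach_prob P (md_to_sched d) s (T i))"
    if "is_sched P \<sigma>" for \<sigma> s
    using optimal[OF that, of s] reward_eq[OF that, of s] reward_eq[OF is_sched_md_to_sched[OF d], of s] by simp
  then show ?thesis
    using d by blast
qed

section \<open>RelReach properties\<close>

definition weighted_reach :: "('s::finite \<Rightarrow> 'a::finite \<Rightarrow> 's \<Rightarrow> real) \<Rightarrow> 'i set \<Rightarrow> ('i \<Rightarrow> real)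
    \<Rightarrow> ('i \<Rightarrow> 's) \<Rightarrow> ('i \<Rightarrow> 's set) \<Rightarrow> ('s, 'a) sched \<Rightarrow> real" where
  "weighted_reach P I q s T \<sigma> = (\<Sum>i\<in>I. q i * reach_prob P \<sigma> (s i) (T i))"

definition has_md_maximizer :: "('s::finite \<Rightarrow> 'a::finite \<Rightarrow> 's \<Rightarrow> real) \<Rightarrow> (('s, 'a) sched \<Rightarrow> real) \<Rightarrow> bool" where
  "has_md_maximizer P F \<longleftrightarrow> (\<exists>d. is_md_sched P d \<and> (\<forall>\<sigma>. is_sched P \<sigma> \<longrightarrow> F \<sigma> \<le> F (md_to_sched d)))"

text \<open>Conditions (c) and (b) of the theorem, for the terms that share one scheduler.\<close>

definition md_sufficient_group :: "('s::finite \<Rightarrow> 'a::finite \<Rightarrow> 's \<Rightarrow> real) \<Rightarrow> 'i set \<Rightarrow> ('i \<Rightarrow> real)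
    \<Rightarrow> ('i \<Rightarrow> 's) \<Rightarrow> ('i \<Rightarrow> 's set) \<Rightarrow> bool" where
  "md_sufficient_group P I q s T \<longleftrightarrow>
     (\<forall>i\<in>I. \<forall>i'\<in>I. T i = T i') \<and> ((\<forall>i\<in>I. 0 \<le> q i) \<or> (\<forall>i\<in>I. q i \<le> 0))
     \<or> (\<forall>i\<in>I. \<forall>i'\<in>I. s i = s i') \<and> (\<forall>i\<in>I. absorbing_set P (T i))"

lemma md_sufficient_group_uminus:
  "md_sufficient_group P I (\<lambda>i. - q i) s T \<longleftrightarrow> md_sufficient_group P I q s T"
  unfolding md_sufficient_group_def by auto

lemma weighted_reach_uminus: "weighted_reach P I (\<lambda>i. - q i) s T = (\<lambda>\<sigma>. - weighted_reach P I q s T \<sigma>)"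
  unfolding weighted_reach_def by (simp add: sum_negf)

lemma common_target_has_md_maximizer:
  assumes mdp: "is_mdp P" and target: "\<forall>i\<in>I. T i = G"
    and sign: "(\<forall>i\<in>I. 0 \<le> q i) \<or> (\<forall>i\<in>I. q i \<le> 0)"
  shows "has_md_maximizer P (weighted_reach P I q s T)"
proof -
  define c :: real where "c = (if \<forall>i\<in>I. 0 \<le> q i then 1 else - 1)"
  obtain d where d: "is_md_sched P d"
    and optimal: "\<And>\<sigma> s. is_sched P \<sigma> \<Longrightarrow> c * reach_prob P \<sigma> s G \<le> c * reach_prob P (md_to_sched d) s G"
    using md_optimal_reach[OF mdp] by blast
  have "q i * reach_prob P \<sigma> (s i) (T i) \<le> q i * reach_prob P (md_to_sched d) (s i) (T i)"
    if "is_sched P \<sigma>" "i \<in> I" for \<sigma> i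
  proof (cases "\<forall>i\<in>I. 0 \<le> q i")
    case True
    then have "c = 1"
      by (simp add: c_def)
    then have "reach_prob P \<sigma> (s i) (T i) \<le> reach_prob P (md_to_sched d) (s i) (T i)"
      using optimal[OF that(1), of "s i"] target that(2) by simp
    then show ?thesis
      using True that(2) by (intro mult_left_mono) auto
  next
    case False
    then have "c = - 1"
      by (simp add: c_def)
    then have "reach_prob P (md_to_sched d) (s i) (T i) \<le> reach_prob P \<sigma> (s i) (T i)"
      using optimal[OF that(1), of "s i"] target that(2) by simp
    then show ?thesis
      using False sign that(2) by (intro mult_left_mono_neg) auto
  qed
  then have "weighted_reach P I q s T \<sigma> \<le> weighted_reach P I q s T (md_to_sched d)" if "is_sched P \<sigma>" for \<sigma>
    unfolding weighted_reach_def using that by (intro sum_mono)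
  then show ?thesis
    unfolding has_md_maximizer_def using d by blast
qed

lemma absorbing_targets_has_md_maximizer:
  assumes mdp: "is_mdp P" and "finite I"
    and start: "\<forall>i\<in>I. s i = s0" and absorbing: "\<forall>i\<in>I. absorbing_set P (T i)"
  shows "has_md_maximizer P (weighted_reach P I q s T)"
proof -
  obtain d where d: "is_md_sched P d"
    and optimal: "\<forall>\<sigma> s. is_sched P \<sigma> \<longrightarrow>
      (\<Sum>i\<in>I. q i * reach_prob P \<sigma> s (T i)) \<le> (\<Sum>i\<in>I. q i * reach_prob P (md_to_sched d) s (T i))"
    using md_optimal_weighted_reach_absorbing[OF mdp \<open>finite I\<close>] absorbing by blast
  have "weighted_reach P I q s T \<sigma> = (\<Sum>i\<in>I. q i * reach_prob P \<sigma> s0 (T i))" for \<sigma>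
    unfolding weighted_reach_def using start by simp
  then show ?thesis
    unfolding has_md_maximizer_def using d optimal by auto
qed

lemma md_sufficient_group_has_md_maximizer:
  assumes "is_mdp P" "finite I" "md_sufficient_group P I q s T"
  shows "has_md_maximizer P (weighted_reach P I q s T)"
proof -
  define i0 where "i0 = (SOME i. i \<in> I)"
  have "i0 \<in> I" if "i \<in> I" for i
    unfolding i0_def using that by (rule someI)
  then have "(\<forall>i\<in>I. T i = T i0) \<and> ((\<forall>i\<in>I. 0 \<le> q i) \<or> (\<forall>i\<in>I. q i \<le> 0))
      \<or> (\<forall>i\<in>I. s i = s i0) \<and> (\<forall>i\<in>I. absorbing_set P (T i))"
    using assms(3) unfolding md_sufficient_group_def by blast
  then show ?thesis
    using common_target_has_md_maximizer[OF assms(1)] absorbing_targets_has_md_maximizer[OF assms(1,2)]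
    by blast
qed

lemma relreach_value_grouped:
  assumes "relreach_wf n m k"
  shows "relreach_value P m q s k T \<sigma>s
    = (\<Sum>j<n. weighted_reach P {i. i < m \<and> k i = j} (\<lambda>i. real_of_rat (q i)) s T (\<sigma>s j))"
proof -
  have "k ` {..<m} \<subseteq> {..<n}"
    using assms unfolding relreach_wf_def by simp
  then have "relreach_value P m q s k T \<sigma>s
      = (\<Sum>j\<in>{..<n}. \<Sum>i\<in>{i \<in> {..<m}. k i = j}. real_of_rat (q i) * reach_prob P (\<sigma>s (k i)) (s i) (T i))"
    unfolding relreach_value_def by (intro sum.group[symmetric]) auto
  then show ?thesis
    unfolding weighted_reach_def by simp
qed

lemma holds_comp_between:
  assumes "holds_comp cmp x c" "y' \<le> x" "x \<le> y"
  shows "holds_comp cmp y c \<or> holds_comp cmp y' c"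
  using assms by (cases cmp) (auto simp: abs_if split: if_splits)

lemma relreach_general_imp_md:
  assumes wf: "relreach_wf n m k"
    and maximizers: "\<And>j. j < n \<Longrightarrow>
      has_md_maximizer P (weighted_reach P {i. i < m \<and> k i = j} (\<lambda>i. real_of_rat (q i)) s T) \<and>
      has_md_maximizer P (\<lambda>\<sigma>. - weighted_reach P {i. i < m \<and> k i = j} (\<lambda>i. real_of_rat (q i)) s T \<sigma>)"
    and "relreach_general P n m q s k T cmp c"
  shows "relreach_md P n m q s k T cmp c"
proof -
  let ?F = "\<lambda>j. weighted_reach P {i. i < m \<and> k i = j} (\<lambda>i. real_of_rat (q i)) s T"
  obtain \<sigma>s where sched: "\<And>j. j < n \<Longrightarrow> is_sched P (\<sigma>s j)"
    and holds: "holds_comp cmp (relreach_value P m q s k T \<sigma>s) (real_of_rat c)"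
    using assms(3) unfolding relreach_general_def by blast
  define dmax where "dmax j = (SOME d. is_md_sched P d \<and> ?F j (\<sigma>s j) \<le> ?F j (md_to_sched d))" for j
  define dmin where "dmin j = (SOME d. is_md_sched P d \<and> ?F j (md_to_sched d) \<le> ?F j (\<sigma>s j))" for j
  have dmax: "is_md_sched P (dmax j) \<and> ?F j (\<sigma>s j) \<le> ?F j (md_to_sched (dmax j))" if "j < n" for j
  proof -
    have "\<exists>d. is_md_sched P d \<and> ?F j (\<sigma>s j) \<le> ?F j (md_to_sched d)"
      using maximizers[OF that] sched[OF that] unfolding has_md_maximizer_def by blast
    then show ?thesis
      unfolding dmax_def by (rule someI_ex)
  qed
  have dmin: "is_md_sched P (dmin j) \<and> ?F j (md_to_sched (dmin j)) \<le> ?F j (\<sigma>s j)" if "j < n" for j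
  proof -
    have "\<exists>d. is_md_sched P d \<and> ?F j (md_to_sched d) \<le> ?F j (\<sigma>s j)"
      using maximizers[OF that] sched[OF that] unfolding has_md_maximizer_def neg_le_iff_le by blast
    then show ?thesis
      unfolding dmin_def by (rule someI_ex)
  qed
  have "relreach_value P m q s k T (\<lambda>j. md_to_sched (dmin j)) \<le> relreach_value P m q s k T \<sigma>s"
    "relreach_value P m q s k T \<sigma>s \<le> relreach_value P m q s k T (\<lambda>j. md_to_sched (dmax j))"
    unfolding relreach_value_grouped[OF wf] using dmin dmax by (auto intro: sum_mono)
  then show ?thesis
    using holds_comp_between[OF holds] dmin dmax unfolding relreach_md_def by blast
qed

lemma relreach_md_imp_general:
  assumes "relreach_md P n m q s k T cmp c"
  shows "relreach_general P n m q s k T cmp c"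
proof -
  obtain ds where "\<forall>j<n. is_md_sched P (ds j)"
    and "holds_comp cmp (relreach_value P m q s k T (\<lambda>j. md_to_sched (ds j))) (real_of_rat c)"
    using assms unfolding relreach_md_def by blast
  then show ?thesis
    unfolding relreach_general_def
    by (intro exI[of _ "\<lambda>j. md_to_sched (ds j)"]) (simp add: is_sched_md_to_sched)
qed

lemma relreach_conditions_md_sufficient:
  assumes "relreach_wf n m k"
    and "n = m
      \<or> ((\<forall>i<m. \<forall>i'<m. k i = k i' \<longrightarrow> s i = s i') \<and> (\<forall>i<m. absorbing_set P (T i)))
      \<or> (\<forall>i<m. \<forall>i'<m. k i = k i' \<longrightarrow> ((q i \<ge> 0 \<longleftrightarrow> q i' \<ge> 0) \<and> T i = T i'))"
  shows "md_sufficient_group P {i. i < m \<and> k i = j} (\<lambda>i. real_of_rat (q i)) s T"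
proof -
  have "n = m \<Longrightarrow> inj_on k {..<m}"
    using assms(1) unfolding relreach_wf_def by (simp add: eq_card_imp_inj_on)
  then consider
      "\<forall>i<m. \<forall>i'<m. k i = k i' \<longrightarrow> s i = s i'" "\<forall>i<m. absorbing_set P (T i)"
    | "\<forall>i<m. \<forall>i'<m. k i = k i' \<longrightarrow> (q i \<ge> 0 \<longleftrightarrow> q i' \<ge> 0) \<and> T i = T i'"
    using assms(2) by (auto dest: inj_onD)
  then show ?thesis
  proof cases
    case 1
    then show ?thesis unfolding md_sufficient_group_def by auto
  next
    case 2
    then have "(\<forall>i\<in>{i. i < m \<and> k i = j}. 0 \<le> q i) \<or> (\<forall>i\<in>{i. i < m \<and> k i = j}. q i \<le> 0)"
      by (metis (mono_tags, lifting) linorder_le_cases mem_Collect_eq)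
    then show ?thesis
      using 2 unfolding md_sufficient_group_def by auto
  qed
qed

theorem corollary1:
  fixes P :: "'s::finite \<Rightarrow> 'a::finite \<Rightarrow> 's \<Rightarrow> real"
    and n m :: nat and q :: "nat \<Rightarrow> rat" and c :: rat
    and s :: "nat \<Rightarrow> 's" and k :: "nat \<Rightarrow> nat" and T :: "nat \<Rightarrow> 's set"
    and cmp :: comparison
  assumes "is_mdp P"
    and "relreach_wf n m k"
    and "\<forall>\<epsilon>. cmp = NotApprox \<epsilon> \<longrightarrow> \<epsilon> \<ge> 0"
    and "n = m
      \<or> ((\<forall>i<m. \<forall>i'<m. k i = k i' \<longrightarrow> s i = s i') \<and> (\<forall>i<m. absorbing_set P (T i)))
      \<or> (\<forall>i<m. \<forall>i'<m. k i = k i' \<longrightarrow> ((q i \<ge> 0 \<longleftrightarrow> q i' \<ge> 0) \<and> T i = T i'))"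
  shows "relreach_general P n m q s k T cmp c \<longleftrightarrow> relreach_md P n m q s k T cmp c"
proof -
  let ?I = "\<lambda>j. {i. i < m \<and> k i = j}"
  have sufficient: "md_sufficient_group P (?I j) (\<lambda>i. real_of_rat (q i)) s T" for j
    by (rule relreach_conditions_md_sufficient[OF assms(2,4)])
  then have sufficient_neg: "md_sufficient_group P (?I j) (\<lambda>i. - real_of_rat (q i)) s T" for j
    by (simp only: md_sufficient_group_uminus)
  have "has_md_maximizer P (weighted_reach P (?I j) (\<lambda>i. - real_of_rat (q i)) s T)" for j
    using md_sufficient_group_has_md_maximizer[OF assms(1) _ sufficient_neg] by simp
  then have "has_md_maximizer P (\<lambda>\<sigma>. - weighted_reach P (?I j) (\<lambda>i. real_of_rat (q i)) s T \<sigma>)" for j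
    by (simp only: weighted_reach_uminus)
  moreover have "has_md_maximizer P (weighted_reach P (?I j) (\<lambda>i. real_of_rat (q i)) s T)" for j
    using md_sufficient_group_has_md_maximizer[OF assms(1) _ sufficient] by simp
  ultimately show ?thesis
    using relreach_general_imp_md[OF assms(2)] relreach_md_imp_general by blast
qed

end
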